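(* The Lie algebra $\Lambda(\mathbb{Q}\mathrm{Tree})$ is not finitely generated. Furthermore, the Lie algebra $\Lambda(\mathbb{Q}\mathrm{Tree}^-)$ is not finitely generated either.
   Context: $\mathrm{Tree}((m))$, $m\ge1$, is the set of planar rooted trees with one root at the bottom and $m$ leaves at the top labeled $1,\dots,m$ from left to right, every internal vertex having at least two inputs; equivalently, meaningful ways of inserting parentheses into the word $12\cdots m$ (e.g. $\mathrm{Tree}((1))=\{1\}$, $\mathrm{Tree}((2))=\{(12)\}$, $\mathrm{Tree}((3))=\{((12)3),(1(23)),(123)\}$). Composition $S\circ_iT$ grafts the root of $T$ to the $i$-th leaf of $S$; this makes $\mathrm{Tree}$ a nonsymmetric operad of sets with unit the trivial tree $1$. For $c\in\mathrm{Tree}((m))$, $m\ge2$, the face $\partial_ic\in\mathrm{Tree}((m-1))$ is obtained by erasing the $i$-th leaf of $c$ (suppressing any vertex left with one input), e.g. $\partial_i((1(23))4)=((12)3)$ for $1\le i\le3$, $\partial_4((1(23))4)=(1(23))$. The operad $\mathrm{Tree}^-$ has $\mathrm{Tree}^-((0))=\{\circ\}$, $\mathrm{Tree}^-((m))=\mathrm{Tree}((m))$ for $m\ge1$, grafting compositions, and $c\circ_i\circ=\partial_ic$, $1\circ_1\circ=\circ$. For a nonsymmetric operad of sets $\mathcal{C}$, $\Lambda(\mathbb{Q}\mathcal{C})=\bigoplus_{m\ge0}\mathbb{Q}\mathcal{C}((m))$ with Lie bracket $[c,d]=\sum_{t=1}^{j}d\circ_tc-\sum_{s=1}^{k}c\circ_sd$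 for $c\in\mathcal{C}((k))$, $d\in\mathcal{C}((j))$, extended bilinearly. *)

theory Defs
  imports Complex_Main
begin

text \<open>A planar rooted tree is either the trivial tree (a single leaf) or a vertex
with an ordered list of subtrees.  Leaves are numbered 1,...,m from left to right.\<close>

datatype ptree = Leaf | Node "ptree list"

fun leaves :: "ptree \<Rightarrow> nat" where
  "leaves Leaf = 1"
| "leaves (Node ts) = sum_list (map leaves ts)"

inductive wf_tree :: "ptree \<Rightarrow> bool" where
  "wf_tree Leaf"
| "\<lbrakk>length ts \<ge> 2; \<forall>t\<in>set ts. wf_tree t\<rbrakk> \<Longrightarrow> wf_tree (Node ts)"

text \<open>Grafting: graft S i T grafts the root of T onto the i-th leaf of S (1-based).\<close>
fun graft :: "ptree \<Rightarrow> nat \<Rightarrow> ptree \<Rightarrow> ptree"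
and graft_list :: "ptree list \<Rightarrow> nat \<Rightarrow> ptree \<Rightarrow> ptree list" where
  "graft Leaf i T = (if i = 1 then T else Leaf)"
| "graft (Node ts) i T = Node (graft_list ts i T)"
| "graft_list [] i T = []"
| "graft_list (t # ts) i T =
     (if i \<le> leaves t then graft t i T # ts else t # graft_list ts (i - leaves t) T)"

text \<open>Erasing the i-th leaf, suppressing vertices left with one input.
  The result is None exactly when the whole tree disappears (the trivial tree).\<close>
fun erase :: "ptree \<Rightarrow> nat \<Rightarrow> ptree option"
and erase_list :: "ptree list \<Rightarrow> nat \<Rightarrow> ptree list" where
  "erase Leaf i = (if i = 1 then None else Some Leaf)"
| "erase (Node ts) i =
     (case erase_list ts i of [] \<Rightarrow> None | [t] \<Rightarrow> Some t | us \<Rightarrow> Some (Node us))"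
| "erase_list [] i = []"
| "erase_list (t # ts) i =
     (if i \<le> leaves t then (case erase t i of None \<Rightarrow> ts | Some u \<Rightarrow> u # ts)
      else t # erase_list ts (i - leaves t))"

definition face :: "ptree \<Rightarrow> nat \<Rightarrow> ptree" where
  "face c i = the (erase c i)"

definition Tree :: "ptree set" where
  "Tree = {t. wf_tree t}"

text \<open>Tree^-: None is the extra arity-0 element \<open>\<circ>\<close>, Some t is a tree t.\<close>
definition TreeM :: "ptree option set" where
  "TreeM = insert None (Some ` Tree)"

fun arityM :: "ptree option \<Rightarrow> nat" where
  "arityM None = 0"
| "arityM (Some t) = leaves t"

fun compM :: "ptree option \<Rightarrow> nat \<Rightarrow> ptree option \<Rightarrow> ptree option" where
  "compM (Some c) i (Some d) = Some (graft c i d)"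
| "compM (Some c) i None = (if c = Leaf then None else Some (face c i))"
| "compM None i x = None"

text \<open>An operad is given by a carrier C, an arity function and partial compositions
  \<open>cp c i d = c \<circ>_i d\<close>.  Elements of \<Lambda>(QC) are finitely supported
  rational functions on C (formal finite Q-linear combinations of elements of C).\<close>

definition supp :: "('a \<Rightarrow> rat) \<Rightarrow> 'a set" where
  "supp x = {c. x c \<noteq> 0}"

definition LieAlg :: "'a set \<Rightarrow> ('a \<Rightarrow> rat) set" where
  "LieAlg C = {x. finite (supp x) \<and> supp x \<subseteq> C}"

definition basis_bracket ::
  "('a \<Rightarrow> nat) \<Rightarrow> ('a \<Rightarrow> nat \<Rightarrow> 'a \<Rightarrow> 'a) \<Rightarrow> 'a \<Rightarrow> 'a \<Rightarrow> ('a \<Rightarrow> rat)" where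
  "basis_bracket ar cp c d = (\<lambda>z.
     (\<Sum>t\<in>{1..ar d}. if cp d t c = z then 1 else 0)
   - (\<Sum>s\<in>{1..ar c}. if cp c s d = z then 1 else 0))"

definition lie_bracket ::
  "('a \<Rightarrow> nat) \<Rightarrow> ('a \<Rightarrow> nat \<Rightarrow> 'a \<Rightarrow> 'a) \<Rightarrow> ('a \<Rightarrow> rat) \<Rightarrow> ('a \<Rightarrow> rat) \<Rightarrow> ('a \<Rightarrow> rat)" where
  "lie_bracket ar cp x y = (\<lambda>z.
     \<Sum>c\<in>supp x. \<Sum>d\<in>supp y. x c * y d * basis_bracket ar cp c d z)"

inductive_set lie_span ::
  "('a \<Rightarrow> nat) \<Rightarrow> ('a \<Rightarrow> nat \<Rightarrow> 'a \<Rightarrow> 'a) \<Rightarrow> ('a \<Rightarrow> rat) set \<Rightarrow> ('a \<Rightarrow> rat) set"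
  for ar cp S where
  gen: "x \<in> S \<Longrightarrow> x \<in> lie_span ar cp S"
| zero: "(\<lambda>_. 0) \<in> lie_span ar cp S"
| add: "x \<in> lie_span ar cp S \<Longrightarrow> y \<in> lie_span ar cp S \<Longrightarrow> (\<lambda>z. x z + y z) \<in> lie_span ar cp S"
| smult: "x \<in> lie_span ar cp S \<Longrightarrow> (\<lambda>z. r * x z) \<in> lie_span ar cp S"
| bracket: "x \<in> lie_span ar cp S \<Longrightarrow> y \<in> lie_span ar cp S \<Longrightarrow> lie_bracket ar cp x y \<in> lie_span ar cp S"

definition lie_fin_gen ::
  "'a set \<Rightarrow> ('a \<Rightarrow> nat) \<Rightarrow> ('a \<Rightarrow> nat \<Rightarrow> 'a \<Rightarrow> 'a) \<Rightarrow> bool" where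
  "lie_fin_gen C ar cp \<longleftrightarrow>
     (\<exists>S. finite S \<and> S \<subseteq> LieAlg C \<and> lie_span ar cp S = LieAlg C)"

end

theory Submission imports Defs begin

text \<open>Composition in \<open>Tree\<close> and \<open>Tree\<^sup>-\<close> never creates a vertex with more inputs than
  the vertices already present, and a bracket of basis elements is a combination of
  compositions of them.  Hence every tree in the support of an element of the Lie subalgebra
  generated by finitely many elements has vertices of bounded valence, whereas the corollas
  have vertices of arbitrarily large valence.\<close>

lemma lie_span_supp_induct:
  assumes "x \<in> lie_span ar cp S" "x z \<noteq> 0"
    and generators: "\<And>x z. x \<in> S \<Longrightarrow> x z \<noteq> 0 \<Longrightarrow> P z"
    and composition: "\<And>c d t. P c \<Longrightarrow> P d \<Longrightarrow> t \<in> {1..ar d} \<Longrightarrow> P (cp d t c)"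
  shows "P z"
  using assms(1,2)
proof (induction x arbitrary: z rule: lie_span.induct)
  case (gen x) then show ?case using generators by blast
next
  case zero then show ?case by simp
next
  case (add x y) then show ?case by (cases "x z = 0") auto
next
  case (smult x r) then show ?case by fastforce
next
  case (bracket x y)
  have "(\<Sum>c\<in>supp x. \<Sum>d\<in>supp y. x c * y d * basis_bracket ar cp c d z) \<noteq> 0"
    using bracket.prems by (simp add: lie_bracket_def)
  then obtain c where c: "c \<in> supp x"
    and inner_nz: "(\<Sum>d\<in>supp y. x c * y d * basis_bracket ar cp c d z) \<noteq> 0"
    by (rule sum.not_neutral_contains_not_neutral)
  from inner_nz obtain d where d: "d \<in> supp y" and "x c * y d * basis_bracket ar cp c d z \<noteq> 0"
    by (rule sum.not_neutral_contains_not_neutral)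
  then have bracket_nz: "basis_bracket ar cp c d z \<noteq> 0" by simp
  have "P c" "P d" using bracket.IH c d by (auto simp: supp_def)
  have "(\<exists>t\<in>{1..ar d}. cp d t c = z) \<or> (\<exists>s\<in>{1..ar c}. cp c s d = z)"
  proof (rule ccontr)
    assume "\<not> ?thesis"
    then have "(\<Sum>t\<in>{1..ar d}. if cp d t c = z then 1 else (0::rat)) = 0"
      "(\<Sum>s\<in>{1..ar c}. if cp c s d = z then 1 else (0::rat)) = 0"
      by (auto intro: sum.neutral)
    then show False using bracket_nz unfolding basis_bracket_def by simp
  qed
  then show ?case using composition \<open>P c\<close> \<open>P d\<close> by blast
qed

lemma not_lie_fin_gen_if_rank_unbounded:
  fixes rank :: "'a \<Rightarrow> nat"
  assumes closed: "\<And>c d t. c \<in> C \<Longrightarrow> d \<in> C \<Longrightarrow> t \<in> {1..ar d} \<Longrightarrow>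
      cp d t c \<in> C \<and> rank (cp d t c) \<le> max (rank c) (rank d)"
    and unbounded: "\<And>n. \<exists>c\<in>C. n < rank c"
  shows "\<not> lie_fin_gen C ar cp"
proof
  assume "lie_fin_gen C ar cp"
  then obtain S where S: "finite S" "S \<subseteq> LieAlg C" "lie_span ar cp S = LieAlg C"
    unfolding lie_fin_gen_def by blast
  define U where "U = (\<Union>x\<in>S. supp x)"
  have "finite U" "U \<subseteq> C" using S(1,2) unfolding U_def LieAlg_def by auto
  define N where "N = (\<Sum>u\<in>U. rank u)"
  have rank_U: "rank u \<le> N" if "u \<in> U" for u
    unfolding N_def using \<open>finite U\<close> that by (intro member_le_sum) auto
  obtain c where "c \<in> C" "N < rank c" using unbounded by blast
  define \<delta> where "\<delta> = (\<lambda>z. if z = c then (1::rat) else 0)"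
  have "supp \<delta> = {c}" unfolding supp_def \<delta>_def by auto
  then have "\<delta> \<in> lie_span ar cp S" using S(3) \<open>c \<in> C\<close> by (simp add: LieAlg_def)
  moreover have "\<delta> c \<noteq> 0" unfolding \<delta>_def by simp
  ultimately have "c \<in> C \<and> rank c \<le> N"
  proof (rule lie_span_supp_induct[where P = "\<lambda>z. z \<in> C \<and> rank z \<le> N"])
    fix x z assume "x \<in> S" "x z \<noteq> 0"
    then have "z \<in> U" unfolding U_def supp_def by auto
    then show "z \<in> C \<and> rank z \<le> N" using rank_U \<open>U \<subseteq> C\<close> by blast
  next
    fix c d t assume "c \<in> C \<and> rank c \<le> N" "d \<in> C \<and> rank d \<le> N" "t \<in> {1..ar d}"
    then show "cp d t c \<in> C \<and> rank (cp d t c) \<le> N" using closed[of c d t] by auto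
  qed
  then show False using \<open>N < rank c\<close> by simp
qed

lemma wf_tree_Node_iff [simp]:
  "wf_tree (Node ts) \<longleftrightarrow> length ts \<ge> 2 \<and> (\<forall>t\<in>set ts. wf_tree t)"
  by (subst wf_tree.simps) auto

lemma wf_tree_Leaf [simp]: "wf_tree Leaf"
  by (rule wf_tree.intros)

fun max_valence :: "ptree \<Rightarrow> nat" and max_valence_list :: "ptree list \<Rightarrow> nat" where
  "max_valence Leaf = 0"
| "max_valence (Node ts) = max (length ts) (max_valence_list ts)"
| "max_valence_list [] = 0"
| "max_valence_list (t # ts) = max (max_valence t) (max_valence_list ts)"

lemma max_valence_corolla: "max_valence (Node (replicate n Leaf)) = n"
proof -
  have "max_valence_list (replicate n Leaf) = 0" by (induction n) auto
  then show ?thesis by simp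
qed

lemma max_valence_graft:
  "max_valence (graft c i d) \<le> max (max_valence c) (max_valence d)"
  "max_valence_list (graft_list ts i d) \<le> max (max_valence_list ts) (max_valence d)
     \<and> length (graft_list ts i d) = length ts"
  by (induction c i d and ts i d rule: graft_graft_list.induct) auto

lemma wf_tree_graft:
  "wf_tree c \<Longrightarrow> wf_tree d \<Longrightarrow> wf_tree (graft c i d)"
  "\<forall>t\<in>set ts. wf_tree t \<Longrightarrow> wf_tree d \<Longrightarrow>
     (\<forall>t\<in>set (graft_list ts i d). wf_tree t) \<and> length (graft_list ts i d) = length ts"
  by (induction c i d and ts i d rule: graft_graft_list.induct) auto

lemma erase_Node_SomeE:
  assumes "erase (Node ts) i = Some u"
  obtains "erase_list ts i = [u]"
  | t1 t2 r where "erase_list ts i = t1 # t2 # r" "u = Node (t1 # t2 # r)"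
  using assms by (cases "erase_list ts i" rule: remdups_adj.cases) auto

lemma max_valence_erase:
  "erase c i = Some u \<Longrightarrow> max_valence u \<le> max_valence c"
  "max_valence_list (erase_list ts i) \<le> max_valence_list ts
     \<and> length (erase_list ts i) \<le> length ts"
proof (induction c i and ts i arbitrary: u rule: erase_erase_list.induct)
  case (2 ts i)
  from 2(2) show ?case
  proof (cases rule: erase_Node_SomeE)
    case 1 then show ?thesis using "2.IH" by (simp add: le_max_iff_disj)
  next
    case 2 then show ?thesis using "2.IH" by (simp add: max_def)
  qed
next
  case (4 t ts i)
  show ?case
  proof (cases "i \<le> leaves t")
    case True then show ?thesis using 4 by (cases "erase t i") auto
  next
    case False then show ?thesis using 4 by auto
  qed
qed (simp_all split: if_splits)

lemma wf_tree_erase: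
  "wf_tree c \<Longrightarrow> erase c i = Some u \<Longrightarrow> wf_tree u"
  "\<forall>t\<in>set ts. wf_tree t \<Longrightarrow>
     (\<forall>t\<in>set (erase_list ts i). wf_tree t) \<and> length ts \<le> length (erase_list ts i) + 1"
proof (induction c i and ts i arbitrary: u rule: erase_erase_list.induct)
  case (2 ts i)
  from 2(3) show ?case
    by (cases rule: erase_Node_SomeE) (use "2.IH" "2.prems"(1) in simp_all)
next
  case (4 t ts i)
  have "wf_tree t" "\<forall>x\<in>set ts. wf_tree x" using "4.prems" by auto
  show ?case
  proof (cases "i \<le> leaves t")
    case True
    then show ?thesis
      using "4.IH"(1) \<open>wf_tree t\<close> \<open>\<forall>x\<in>set ts. wf_tree x\<close> by (cases "erase t i") auto
  next
    case False
    then show ?thesis using "4.IH"(2) \<open>wf_tree t\<close> \<open>\<forall>x\<in>set ts. wf_tree x\<close> by simp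
  qed
qed (simp_all split: if_splits)

lemma erase_eq_SomeE:
  assumes "wf_tree c" "c \<noteq> Leaf"
  obtains u where "erase c i = Some u"
proof -
  from assms obtain ts where c: "c = Node ts" "length ts \<ge> 2" "\<forall>t\<in>set ts. wf_tree t"
    by (cases c) auto
  then have "erase_list ts i \<noteq> []" using wf_tree_erase(2)[of ts i] by auto
  then show ?thesis using c that by (cases "erase_list ts i" rule: remdups_adj.cases) auto
qed

lemma graft_closed:
  "c \<in> Tree \<Longrightarrow> d \<in> Tree \<Longrightarrow>
     graft d t c \<in> Tree \<and> max_valence (graft d t c) \<le> max (max_valence c) (max_valence d)"
  using wf_tree_graft(1) max_valence_graft(1)[of d t c] by (auto simp: Tree_def)

lemma compM_closed:
  fixes rank :: "ptree option \<Rightarrow> nat"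
  defines "rank \<equiv> case_option 0 max_valence"
  assumes "c \<in> TreeM" "d \<in> TreeM"
  shows "compM d t c \<in> TreeM \<and> rank (compM d t c) \<le> max (rank c) (rank d)"
proof (cases d)
  case (Some d')
  show ?thesis
  proof (cases c)
    case None
    show ?thesis
    proof (cases "d' = Leaf")
      case False
      have "wf_tree d'" using assms(3) Some by (auto simp: TreeM_def Tree_def)
      then obtain u where "erase d' t = Some u" using False by (blast elim: erase_eq_SomeE)
      then show ?thesis
        using \<open>wf_tree d'\<close> wf_tree_erase(1) max_valence_erase(1) Some None False
        by (auto simp: rank_def face_def TreeM_def Tree_def)
    qed (simp add: Some None TreeM_def)
  next
    case (Some c')
    then show ?thesis using \<open>d = Some d'\<close> assms(2,3) graft_closed[of c' d' t]
      by (auto simp: rank_def TreeM_def)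
  qed
qed (simp add: TreeM_def)

theorem corollary6p5:
  shows "\<not> lie_fin_gen Tree leaves graft \<and> \<not> lie_fin_gen TreeM arityM compM"
proof
  have corolla: "Node (replicate (n + 2) Leaf) \<in> Tree" for n
    by (simp add: Tree_def)
  show "\<not> lie_fin_gen Tree leaves graft"
  proof (rule not_lie_fin_gen_if_rank_unbounded[where rank = max_valence])
    show "\<exists>c\<in>Tree. n < max_valence c" for n
      using corolla[of n] max_valence_corolla
      by (intro bexI[of _ "Node (replicate (n + 2) Leaf)"]) auto
  qed (rule graft_closed)
  show "\<not> lie_fin_gen TreeM arityM compM"
  proof (rule not_lie_fin_gen_if_rank_unbounded[where rank = "case_option 0 max_valence"])
    show "\<exists>c\<in>TreeM. n < case_option 0 max_valence c" for n
      using corolla[of n] max_valence_corolla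
      by (intro bexI[of _ "Some (Node (replicate (n + 2) Leaf))"]) (auto simp: TreeM_def)
  qed (rule compM_closed)
qed

end
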